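(* Let $\mathcal{U}$ be a universe of $n$ element types with frequencies $f:\mathcal{U}\to\{1,2,\dots\}$ and total $N=\sum_{e\in\mathcal{U}}f(e)$. Let $\mathcal{G}=\{\mathbf{g}_1,\dots,\mathbf{g}_\ell\}$, $\ell\ge 2$, be a partition of $\mathcal{U}$ into nonempty groups with $n_j=|\mathbf{g}_j|$ and $N_j=\sum_{e\in\mathbf{g}_j}f(e)$. Let $w$ be a positive integer such that each $w_j=\frac{n_j}{n}w$ is a positive integer. Consider (i) the standard one-row Count-Min sketch (CM), in which each element type is hashed independently and uniformly at random into $w$ bins, and (ii) the one-row Fair-Count-Min sketch (FCM), in which the $w$ bins are split into disjoint blocks of sizes $w_1,\dots,w_\ell$ and each element type of $\mathbf{g}_j$ is hashed independently and uniformly at random into block $j$. Then $\mathcal{L}_{FCM}<\mathcal{L}_{CM}$, i.e. the price of fairness $\mathcal{L}_{FCM}-\mathcal{L}_{CM}$ is negative.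
   Context: In a one-row sketch with hash $\mathsf{h}$, the estimate of $e$ is $\hat f(e)=\sum_{e':\mathsf{h}(e')=\mathsf{h}(e)}f(e')$ and its additive error is $\varepsilon_A(e)=\hat f(e)-f(e)=\sum_{e'\neq e:\mathsf{h}(e')=\mathsf{h}(e)}f(e')$. The total expected additive error of a sketch is $\mathcal{L}=\sum_{e\in\mathcal{U}}\mathbb{E}[\varepsilon_A(e)]$, expectation over the random hash. The price of fairness is $\mathcal{L}_{FCM}-\mathcal{L}_{CM}$. *)

theory Defs
  imports "HOL-Probability.Probability"
begin

definition est :: "'a set \<Rightarrow> ('a \<Rightarrow> nat) \<Rightarrow> ('a \<Rightarrow> nat) \<Rightarrow> 'a \<Rightarrow> real" where
  "est U f h e = (\<Sum>e'\<in>{e'\<in>U. h e' = h e}. real (f e'))"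

definition add_err :: "'a set \<Rightarrow> ('a \<Rightarrow> nat) \<Rightarrow> ('a \<Rightarrow> nat) \<Rightarrow> 'a \<Rightarrow> real" where
  "add_err U f h e = est U f h e - real (f e)"

definition total_loss :: "'a set \<Rightarrow> ('a \<Rightarrow> nat) \<Rightarrow> ('a \<Rightarrow> nat) set \<Rightarrow> real" where
  "total_loss U f H = (\<Sum>e\<in>U. measure_pmf.expectation (pmf_of_set H) (\<lambda>h. add_err U f h e))"

text \<open>Count-Min: each element independently uniform in the w bins {0..<w}.\<close>
definition CM_hashes :: "'a set \<Rightarrow> nat \<Rightarrow> ('a \<Rightarrow> nat) set" where
  "CM_hashes U w = (U \<rightarrow>\<^sub>E {..<w})"

definition block :: "(nat \<Rightarrow> nat) \<Rightarrow> nat \<Rightarrow> nat set" where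
  "block wj j = {(\<Sum>i<j. wj i) ..< (\<Sum>i<j. wj i) + wj j}"

text \<open>Fair-Count-Min: each element of group g j independently uniform in block j.\<close>
definition FCM_hashes :: "'a set \<Rightarrow> nat \<Rightarrow> (nat \<Rightarrow> 'a set) \<Rightarrow> (nat \<Rightarrow> nat) \<Rightarrow> ('a \<Rightarrow> nat) set" where
  "FCM_hashes U l g wj =
     {h. (\<forall>e. e \<notin> U \<longrightarrow> h e = undefined) \<and> (\<forall>j<l. \<forall>e\<in>g j. h e \<in> block wj j)}"

end

theory Submission
  imports Defs
begin

text \<open>By linearity of expectation the expected additive error of \<open>e\<close> is the
  frequency-weighted sum of the probabilities that \<open>e\<close> collides with the other element types.
  When every element type is hashed independently and uniformly into its own set of bins, and
  these bin sets are pairwise equal or disjoint, two element types collide with probability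
  \<open>1/|B|\<close> if they share the bin set \<open>B\<close> and never otherwise. So each unit of frequency of an
  element type of group \<open>j\<close> costs \<open>(n - 1)/w\<close> under CM but only
  \<open>(n\<^sub>j - 1)/w\<^sub>j = (n\<^sub>j - 1) n/(n\<^sub>j w)\<close> under FCM, which is strictly smaller because
  \<open>n\<^sub>j < n\<close> when there are at least two groups.\<close>

lemma add_err_eq_sum_collisions:
  assumes "finite U" "e \<in> U"
  shows "add_err U f h e = (\<Sum>e'\<in>U - {e}. real (f e') * (if h e' = h e then 1 else 0))"
proof -
  have "est U f h e = (\<Sum>e'\<in>U. real (f e') * (if h e' = h e then 1 else 0))"
    unfolding est_def using assms(1)
    by (simp add: sum.inter_filter[symmetric] if_distrib cong: if_cong)
  also have "\<dots> = real (f e) + (\<Sum>e'\<in>U - {e}. real (f e') * (if h e' = h e then 1 else 0))"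
    using assms by (simp add: sum.remove)
  finally show ?thesis
    unfolding add_err_def by simp
qed

lemma expectation_add_err:
  assumes "finite H" "H \<noteq> {}" "finite U" "e \<in> U"
  shows "measure_pmf.expectation (pmf_of_set H) (\<lambda>h. add_err U f h e)
       = (\<Sum>e'\<in>U - {e}. real (f e') * measure_pmf.prob (pmf_of_set H) {h. h e' = h e})"
proof -
  have collision_count: "(\<Sum>h\<in>H. if h e' = h e then 1 else 0) / card H
      = measure_pmf.prob (pmf_of_set H) {h. h e' = h e}" for e'
    using assms(1,2) by (simp add: sum.If_cases Int_def measure_pmf_of_set)
  have "measure_pmf.expectation (pmf_of_set H) (\<lambda>h. add_err U f h e)
      = (\<Sum>h\<in>H. add_err U f h e) / card H"
    using assms(1,2) by (simp add: integral_pmf_of_set)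
  also have "\<dots> = (\<Sum>e'\<in>U - {e}. real (f e') * ((\<Sum>h\<in>H. if h e' = h e then 1 else 0) / card H))"
    using assms(3,4)
    by (simp add: add_err_eq_sum_collisions sum.swap[of _ H] sum_divide_distrib sum_distrib_left)
  finally show ?thesis
    by (simp only: collision_count)
qed

lemma prob_collision_PiE:
  assumes U: "finite U"
    and B: "\<And>x. x \<in> U \<Longrightarrow> finite (B x)" "\<And>x. x \<in> U \<Longrightarrow> B x \<noteq> {}"
    and e: "e \<in> U" "e' \<in> U" "e \<noteq> e'"
  shows "measure_pmf.prob (pmf_of_set (PiE U B)) {h. h e' = h e}
       = card (B e \<inter> B e') / (card (B e) * card (B e'))"
proof -
  let ?p = "\<lambda>x. pmf_of_set (B x)"
  have "PiE_dflt U undefined B = PiE U B"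
    by (auto simp: PiE_dflt_def PiE_def extensional_def)
  then have Pi: "pmf_of_set (PiE U B) = Pi_pmf U undefined ?p"
    using Pi_pmf_of_set[of U B undefined] U B by simp
  define V where "V = U - {e}"
  have V: "U = insert e V" "e \<notin> V" "finite V" "e' \<in> V"
    using e U by (auto simp: V_def)
  have marginal: "map_pmf (\<lambda>h. (h e, h e')) (Pi_pmf U undefined ?p) = pair_pmf (?p e) (?p e')"
  proof -
    have "map_pmf (\<lambda>h. (h e, h e')) (Pi_pmf U undefined ?p)
        = map_pmf (\<lambda>(y, h). (y, h e')) (pair_pmf (?p e) (Pi_pmf V undefined ?p))"
      unfolding V(1) using V e
      by (subst Pi_pmf_insert) (auto simp: pmf.map_comp o_def case_prod_unfold)
    also have "\<dots> = pair_pmf (?p e) (map_pmf (\<lambda>h. h e') (Pi_pmf V undefined ?p))"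
      by (simp add: pair_map_pmf2 apsnd_def map_prod_def case_prod_unfold)
    also have "\<dots> = pair_pmf (?p e) (?p e')"
      using V by (simp add: Pi_pmf_component)
    finally show ?thesis .
  qed
  have collision_preimage: "{h. h e' = h e} = (\<lambda>h. (h e, h e')) -` {(a, b). b = a}"
    by auto
  have "measure_pmf.prob (pmf_of_set (PiE U B)) {h. h e' = h e}
      = measure_pmf.prob (pair_pmf (?p e) (?p e')) {(a, b). b = a}"
    unfolding Pi marginal[symmetric] by (simp only: measure_map_pmf collision_preimage)
  also have "\<dots> = measure_pmf.prob (pair_pmf (?p e) (?p e')) ((\<lambda>a. (a, a)) ` (B e \<inter> B e'))"
  proof -
    have "{(a, b). b = a} \<inter> set_pmf (pair_pmf (?p e) (?p e')) = (\<lambda>a. (a, a)) ` (B e \<inter> B e')"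
      using B e by auto
    then show ?thesis
      by (metis measure_Int_set_pmf)
  qed
  also have "\<dots> = (\<Sum>x\<in>(\<lambda>a. (a, a)) ` (B e \<inter> B e'). pmf (pair_pmf (?p e) (?p e')) x)"
    using B e by (intro measure_measure_pmf_finite) auto
  also have "\<dots> = (\<Sum>a\<in>B e \<inter> B e'. 1 / (card (B e) * card (B e')))"
    using B e by (subst sum.reindex) (auto simp: inj_on_def pmf_pair)
  finally show ?thesis
    by simp
qed

lemma total_loss_PiE:
  assumes U: "finite U"
    and B: "\<And>x. x \<in> U \<Longrightarrow> finite (B x)" "\<And>x. x \<in> U \<Longrightarrow> B x \<noteq> {}"
  shows "total_loss U f (PiE U B)
       = (\<Sum>e'\<in>U. real (f e') * (\<Sum>e\<in>U - {e'}. card (B e \<inter> B e') / (card (B e) * card (B e'))))"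
proof -
  have fin: "finite (PiE U B)"
    using U B by (intro finite_PiE) auto
  have ne: "PiE U B \<noteq> {}"
    using B by (simp add: PiE_eq_empty_iff)
  have "total_loss U f (PiE U B)
      = (\<Sum>e\<in>U. \<Sum>e'\<in>U - {e}. real (f e') * (card (B e \<inter> B e') / (card (B e) * card (B e'))))"
    unfolding total_loss_def
  proof (intro sum.cong refl)
    fix e assume e: "e \<in> U"
    have "measure_pmf.prob (pmf_of_set (PiE U B)) {h. h e' = h e}
        = card (B e \<inter> B e') / (card (B e) * card (B e'))" if "e' \<in> U - {e}" for e'
      using prob_collision_PiE[OF U B e] that by auto
    then show "measure_pmf.expectation (pmf_of_set (PiE U B)) (\<lambda>h. add_err U f h e)
        = (\<Sum>e'\<in>U - {e}. real (f e') * (card (B e \<inter> B e') / (card (B e) * card (B e'))))"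
      by (simp add: expectation_add_err[OF fin ne U e])
  qed
  also have "\<dots> = (\<Sum>e'\<in>U. \<Sum>e\<in>U - {e'}. real (f e') * (card (B e \<inter> B e') / (card (B e) * card (B e'))))"
    using sum.swap_restrict[OF U U, where R = "\<lambda>e e'. e \<noteq> e'"]
    by (simp add: set_diff_eq conj_commute eq_commute)
  finally show ?thesis
    by (simp add: sum_distrib_left)
qed

lemma total_loss_PiE_equal_or_disjoint:
  assumes U: "finite U"
    and B: "\<And>x. x \<in> U \<Longrightarrow> finite (B x)" "\<And>x. x \<in> U \<Longrightarrow> B x \<noteq> {}"
    and equal_or_disjoint: "\<And>x y. x \<in> U \<Longrightarrow> y \<in> U \<Longrightarrow> B x = B y \<or> B x \<inter> B y = {}"
  shows "total_loss U f (PiE U B)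
       = (\<Sum>e\<in>U. real (f e) * ((real (card {x \<in> U. B x = B e}) - 1) / card (B e)))"
proof -
  have inner: "(\<Sum>x\<in>U - {e}. card (B x \<inter> B e) / (card (B x) * card (B e)))
      = (real (card {x \<in> U. B x = B e}) - 1) / card (B e)" if e: "e \<in> U" for e
  proof -
    have "(\<Sum>x\<in>U - {e}. card (B x \<inter> B e) / (card (B x) * card (B e)))
        = (\<Sum>x\<in>U - {e}. if B x = B e then 1 / card (B e) else 0)"
    proof (intro sum.cong refl)
      fix x assume "x \<in> U - {e}"
      then show "card (B x \<inter> B e) / (card (B x) * card (B e))
          = (if B x = B e then 1 / card (B e) else 0)"
        using equal_or_disjoint[of x e] B e by auto
    qed
    also have "\<dots> = card ({x \<in> U. B x = B e} - {e}) / card (B e)"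
      using U by (simp add: sum.If_cases set_diff_eq Int_def conj_commute conj_left_commute)
    also have "\<dots> = (real (card {x \<in> U. B x = B e}) - 1) / card (B e)"
    proof -
      have "card {x \<in> U. B x = B e} \<ge> 1"
        using U e by (simp add: Suc_le_eq card_gt_0_iff) blast
      then show ?thesis
        using U e by (simp add: of_nat_diff)
    qed
    finally show ?thesis .
  qed
  show ?thesis
    by (simp only: total_loss_PiE[OF U B] inner cong: sum.cong)
qed

lemma total_loss_CM:
  assumes "finite U" "w > 0"
  shows "total_loss U f (CM_hashes U w) = (\<Sum>e\<in>U. real (f e) * ((real (card U) - 1) / w))"
  unfolding CM_hashes_def using assms
  by (subst total_loss_PiE_equal_or_disjoint) auto

lemma card_block: "card (block wj j) = wj j"
  by (simp add: block_def)

lemma block_disjoint: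
  assumes "i \<noteq> j"
  shows "block wj i \<inter> block wj j = {}"
proof -
  have "block wj i \<inter> block wj j = {}" if "i < j" for i j
  proof -
    have "(\<Sum>k<Suc i. wj k) \<le> (\<Sum>k<j. wj k)"
      using that by (intro sum_mono2) auto
    then show ?thesis
      by (auto simp: block_def)
  qed
  then show ?thesis
    using assms by (metis Int_commute linorder_neq_iff)
qed

lemma block_eq_iff:
  assumes "wj i > 0"
  shows "block wj i = block wj j \<longleftrightarrow> i = j"
proof -
  have "block wj i \<noteq> {}"
    using assms by (simp add: block_def)
  then show ?thesis
    using block_disjoint[of i j wj] by auto
qed

definition group_index :: "nat \<Rightarrow> (nat \<Rightarrow> 'a set) \<Rightarrow> 'a \<Rightarrow> nat" where
  "group_index l g e = (THE j. j < l \<and> e \<in> g j)"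

lemma group_index_eq:
  assumes disjoint: "\<forall>i<l. \<forall>j<l. i \<noteq> j \<longrightarrow> g i \<inter> g j = {}"
    and "j < l" "e \<in> g j"
  shows "group_index l g e = j"
  unfolding group_index_def using assms by (intro the_equality) auto

lemma group_index_mem:
  assumes disjoint: "\<forall>i<l. \<forall>j<l. i \<noteq> j \<longrightarrow> g i \<inter> g j = {}"
    and "e \<in> (\<Union>j<l. g j)"
  shows "group_index l g e < l" "e \<in> g (group_index l g e)"
  using assms group_index_eq[OF disjoint] by auto

lemma FCM_hashes_eq_PiE:
  assumes disjoint: "\<forall>i<l. \<forall>j<l. i \<noteq> j \<longrightarrow> g i \<inter> g j = {}"
    and cover: "(\<Union>j<l. g j) = U"
  shows "FCM_hashes U l g wj = PiE U (\<lambda>e. block wj (group_index l g e))"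
  using group_index_mem[OF disjoint] group_index_eq[OF disjoint] cover
  unfolding FCM_hashes_def PiE_def extensional_def by fastforce

lemma total_loss_FCM:
  assumes U: "finite U"
    and disjoint: "\<forall>i<l. \<forall>j<l. i \<noteq> j \<longrightarrow> g i \<inter> g j = {}"
    and cover: "(\<Union>j<l. g j) = U"
    and wj_pos: "\<forall>j<l. wj j > 0"
  shows "total_loss U f (FCM_hashes U l g wj)
       = (\<Sum>e\<in>U. real (f e) * ((real (card (g (group_index l g e))) - 1) / wj (group_index l g e)))"
proof -
  let ?j = "group_index l g"
  have j: "?j e < l" "e \<in> g (?j e)" if "e \<in> U" for e
    using group_index_mem[OF disjoint] cover that by auto
  have same_block: "{x \<in> U. block wj (?j x) = block wj (?j e)} = g (?j e)" if "e \<in> U" for e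
    using j that wj_pos block_eq_iff group_index_eq[OF disjoint] cover by fastforce
  have "total_loss U f (PiE U (\<lambda>e. block wj (?j e)))
      = (\<Sum>e\<in>U. real (f e) * ((real (card (g (?j e))) - 1) / wj (?j e)))"
  proof (subst total_loss_PiE_equal_or_disjoint)
    show "block wj (?j x) = block wj (?j y) \<or> block wj (?j x) \<inter> block wj (?j y) = {}" for x y
      using block_disjoint[of "?j x" "?j y" wj] by (cases "?j x = ?j y") auto
    show "(\<Sum>e\<in>U. real (f e) * ((real (card {x \<in> U. block wj (?j x) = block wj (?j e)}) - 1)
          / card (block wj (?j e))))
        = (\<Sum>e\<in>U. real (f e) * ((real (card (g (?j e))) - 1) / wj (?j e)))"
      by (intro sum.cong refl) (simp add: same_block card_block)
    show "block wj (?j x) \<noteq> {}" if "x \<in> U" for x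
      using j[OF that] wj_pos by (simp add: block_def)
  qed (simp_all add: U block_def)
  then show ?thesis
    unfolding FCM_hashes_eq_PiE[OF disjoint cover] .
qed

lemma collision_rate_shrinks_with_proportional_width:
  fixes a n w :: real
  assumes "0 < a" "a < n" "0 < w"
  shows "(a - 1) / (a / n * w) < (n - 1) / w"
proof -
  have "(a - 1) * n < (n - 1) * a"
    using assms(2) by (simp add: algebra_simps)
  then have "(a - 1) * n / (a * w) < (n - 1) * a / (a * w)"
    using assms by (intro divide_strict_right_mono) auto
  then show ?thesis
    using assms by (simp add: field_simps)
qed

lemma partition_part_psubset:
  fixes g :: "nat \<Rightarrow> 'a set"
  assumes "2 \<le> l"
    and nonempty: "\<forall>j<l. g j \<noteq> {}"
    and disjoint: "\<forall>i<l. \<forall>j<l. i \<noteq> j \<longrightarrow> g i \<inter> g j = {}"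
    and cover: "(\<Union>j<l. g j) = U"
    and "j < l"
  shows "g j \<subset> U"
proof -
  define i where "i = (if j = 0 then 1 else 0 :: nat)"
  have "i < l" "i \<noteq> j"
    using assms(1) by (auto simp: i_def)
  then obtain x where "x \<in> g i" "x \<notin> g j"
    using nonempty disjoint \<open>j < l\<close> by blast
  then show ?thesis
    using cover \<open>i < l\<close> \<open>j < l\<close> by blast
qed

theorem mainTheorem2:
  fixes U :: "'a set" and f :: "'a \<Rightarrow> nat" and l :: nat and g :: "nat \<Rightarrow> 'a set"
    and w :: nat and wj :: "nat \<Rightarrow> nat"
  assumes finU: "finite U"
    and fpos: "\<forall>e\<in>U. f e \<ge> 1"
    and l2: "l \<ge> 2"
    and gne: "\<forall>j<l. g j \<noteq> {}"
    and gdisj: "\<forall>i<l. \<forall>j<l. i \<noteq> j \<longrightarrow> g i \<inter> g j = {}"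
    and gcover: "(\<Union>j<l. g j) = U"
    and wpos: "w > 0"
    and wj_def: "\<forall>j<l. real (wj j) = real (card (g j)) / real (card U) * real w"
    and wj_pos: "\<forall>j<l. wj j > 0"
  shows "total_loss U f (FCM_hashes U l g wj) < total_loss U f (CM_hashes U w)"
proof -
  have "g 0 \<noteq> {}" "g 0 \<subseteq> U"
    using gne gcover l2 by auto
  then have "U \<noteq> {}"
    by blast
  then show ?thesis
    unfolding total_loss_FCM[OF finU gdisj gcover wj_pos] total_loss_CM[OF finU wpos]
  proof (rule sum_strict_mono[OF finU])
    fix e assume e: "e \<in> U"
    define j where "j = group_index l g e"
    have j: "j < l" "e \<in> g j"
      using group_index_mem[OF gdisj] gcover e unfolding j_def by auto
    have "g j \<subset> U"
      using partition_part_psubset[OF l2 gne gdisj gcover \<open>j < l\<close>] .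
    then have "card (g j) < card U" "card (g j) > 0"
      using finU j(2) by (auto simp: psubset_card_mono card_gt_0_iff dest: finite_subset)
    then have "(real (card (g j)) - 1) / wj j < (real (card U) - 1) / w"
      unfolding wj_def[rule_format, OF \<open>j < l\<close>] using wpos
      by (intro collision_rate_shrinks_with_proportional_width) auto
    then show "real (f e) * ((real (card (g (group_index l g e))) - 1) / wj (group_index l g e))
        < real (f e) * ((real (card U) - 1) / w)"
      using fpos e unfolding j_def by (intro mult_strict_left_mono) auto
  qed
qed

end
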